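(* Let $P,V$ be sets, $O\subseteq P$ a set of collaborating adversaries, $o$ a new principal, $R\subseteq P\times V\times P\times K$ and $k_0\in K$. Then $$\mathrm{Merge}(f^*_R(k_0))\subseteq f^*_{\mathrm{Merge}(R)}(\mathrm{Merge}(k_0)).$$
   Context: $K=2^{P\times V}$. For $R\subseteq P\times V\times P\times K$, $f_R(k)=k\cup\{(p_a,v): (p_b,v)\in k,\ k_a\subseteq k,\ (p_b,v,p_a,k_a)\in R\text{ for some }p_b, k_a\}$ and $f^*_R(k)=\bigcup_{n\ge0}f_R^n(k)$; the same definitions apply over the merged principal set $(P\setminus O)\cup\{o\}$. The merging function is: $\mathrm{Merge}(p)=o$ if $p\in O$ and $\mathrm{Merge}(p)=p$ otherwise; $\mathrm{Merge}(k)=\{(\mathrm{Merge}(p),v):(p,v)\in k\}$ for a state $k$; $\mathrm{Merge}(r)=(\mathrm{Merge}(p_b),v,\mathrm{Merge}(p_a),\mathrm{Merge}(k_a))$ for a rule $r=(p_b,v,p_a,k_a)$; and $\mathrm{Merge}(R)=\{\mathrm{Merge}(r):r\in R\}$. *)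

theory Defs
  imports Main
begin

definition fR :: "('p \<times> 'v \<times> 'p \<times> ('p \<times> 'v) set) set \<Rightarrow> ('p \<times> 'v) set \<Rightarrow> ('p \<times> 'v) set" where
  "fR R k = k \<union> {(pa, v) | pa v. \<exists>pb ka. (pb, v) \<in> k \<and> ka \<subseteq> k \<and> (pb, v, pa, ka) \<in> R}"

definition fR_star :: "('p \<times> 'v \<times> 'p \<times> ('p \<times> 'v) set) set \<Rightarrow> ('p \<times> 'v) set \<Rightarrow> ('p \<times> 'v) set" where
  "fR_star R k = (\<Union>n. (fR R ^^ n) k)"

definition merge_p :: "'p set \<Rightarrow> 'p \<Rightarrow> 'p \<Rightarrow> 'p" where
  "merge_p Adv o_new p = (if p \<in> Adv then o_new else p)"

definition merge_k :: "'p set \<Rightarrow> 'p \<Rightarrow> ('p \<times> 'v) set \<Rightarrow> ('p \<times> 'v) set" where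
  "merge_k Adv o_new k = {(merge_p Adv o_new p, v) | p v. (p, v) \<in> k}"

definition merge_r :: "'p set \<Rightarrow> 'p \<Rightarrow> ('p \<times> 'v \<times> 'p \<times> ('p \<times> 'v) set) \<Rightarrow> ('p \<times> 'v \<times> 'p \<times> ('p \<times> 'v) set)" where
  "merge_r Adv o_new r = (case r of (pb, v, pa, ka) \<Rightarrow> (merge_p Adv o_new pb, v, merge_p Adv o_new pa, merge_k Adv o_new ka))"

definition merge_R :: "'p set \<Rightarrow> 'p \<Rightarrow> ('p \<times> 'v \<times> 'p \<times> ('p \<times> 'v) set) set \<Rightarrow> ('p \<times> 'v \<times> 'p \<times> ('p \<times> 'v) set) set" where
  "merge_R Adv o_new R = merge_r Adv o_new ` R"

end

theory Submission
  imports Defs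
begin

text \<open>Merging is a simulation of one inference step: if a rule \<open>(p\<^sub>b, v, p\<^sub>a, k\<^sub>a)\<close> of \<open>R\<close>
  fires in \<open>k\<close>, then its merged image fires in \<open>Merge(k)\<close>, because \<open>Merge\<close> is monotone on
  states. Induction on the number of steps and distributing \<open>Merge\<close> over the union defining
  \<open>f\<^sup>*\<close> give the inclusion.\<close>

lemma merge_k_mono: "k \<subseteq> k' \<Longrightarrow> merge_k A o' k \<subseteq> merge_k A o' k'"
  unfolding merge_k_def by blast

lemma merge_k_UN: "merge_k A o' (\<Union>n. K n) = (\<Union>n. merge_k A o' (K n))"
  unfolding merge_k_def by blast

lemma fR_mono: "k \<subseteq> k' \<Longrightarrow> fR R k \<subseteq> fR R k'"
  unfolding fR_def by blast

lemma merge_k_fR_subset: "merge_k A o' (fR R k) \<subseteq> fR (merge_R A o' R) (merge_k A o' k)"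
proof
  fix x assume "x \<in> merge_k A o' (fR R k)"
  then obtain p v where x: "x = (merge_p A o' p, v)" and pv: "(p, v) \<in> fR R k"
    unfolding merge_k_def by blast
  show "x \<in> fR (merge_R A o' R) (merge_k A o' k)"
  proof (cases "(p, v) \<in> k")
    case True
    then show ?thesis unfolding x fR_def merge_k_def by blast
  next
    case False
    then obtain pb ka where pb: "(pb, v) \<in> k" and ka: "ka \<subseteq> k" and rule: "(pb, v, p, ka) \<in> R"
      using pv unfolding fR_def by blast
    have "(merge_p A o' pb, v, merge_p A o' p, merge_k A o' ka) \<in> merge_R A o' R"
      using rule unfolding merge_R_def merge_r_def by force
    moreover have "(merge_p A o' pb, v) \<in> merge_k A o' k"
      using pb unfolding merge_k_def by blast
    moreover have "merge_k A o' ka \<subseteq> merge_k A o' k"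
      using ka by (rule merge_k_mono)
    ultimately show ?thesis unfolding x fR_def by blast
  qed
qed

lemma merge_k_funpow_fR_subset:
  "merge_k A o' ((fR R ^^ n) k) \<subseteq> (fR (merge_R A o' R) ^^ n) (merge_k A o' k)"
proof (induction n)
  case 0
  then show ?case by simp
next
  case (Suc n)
  have "merge_k A o' ((fR R ^^ Suc n) k) \<subseteq> fR (merge_R A o' R) (merge_k A o' ((fR R ^^ n) k))"
    using merge_k_fR_subset by simp
  also have "\<dots> \<subseteq> (fR (merge_R A o' R) ^^ Suc n) (merge_k A o' k)"
    using fR_mono[OF Suc.IH] by simp
  finally show ?case .
qed

theorem mainTheorem4:
  fixes P Adv :: "'p set" and V :: "'v set" and o_new :: 'p
    and R :: "('p \<times> 'v \<times> 'p \<times> ('p \<times> 'v) set) set" and k0 :: "('p \<times> 'v) set"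
  assumes "Adv \<subseteq> P"
    and "o_new \<notin> P"
    and "R \<subseteq> P \<times> V \<times> P \<times> Pow (P \<times> V)"
    and "k0 \<in> Pow (P \<times> V)"
  shows "merge_k Adv o_new (fR_star R k0) \<subseteq> fR_star (merge_R Adv o_new R) (merge_k Adv o_new k0)"
  unfolding fR_star_def merge_k_UN
  by (rule UN_mono) (simp_all add: merge_k_funpow_fR_subset)

end
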